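(* Let $\underline{\mathbb{G}}=(\mathbb{G},\mathcal{V},\omega_{\mathcal{V}},\mathcal{F},\omega_{\mathcal{F}})$ be a packaged ribbon graph and let $e$ be an edge of $\mathbb{G}$. Then \[(\underline{\mathbb{G}}\backslash e)^* = \underline{\mathbb{G}}^*/e \qquad\text{and}\qquad (\underline{\mathbb{G}}/ e)^* = \underline{\mathbb{G}}^*\backslash e.\]
   Context: All ribbon graphs are orientable. A ribbon graph $\mathbb{G}=(V,E)$ is an orientable surface with boundary formed as a union of discs $V$ (vertices) and discs $E$ (edges) such that vertices and edges meet in disjoint arcs, each arc lies on the boundary of exactly one vertex and one edge, and each edge contains exactly two such arcs. $\mathbb{G}\backslash e$ is obtained by removing the edge $e$; $\mathbb{G}/e$ (contraction) is obtained by taking the boundary curve(s) of $e\cup u\cup v$ (where $u,v$ are the ends of $e$, possibly equal), attaching a disc to each such curve to form new vertices, and removing $e,u,v$. The dual $\mathbb{G}^*$ is obtained by capping each boundary component of $\mathbb{G}$ with a disc; these discs are the vertices of $\mathbb{G}^*$ and the edges are the same as those of $\mathbb{G}$. Thus vertices of $\mathbb{G}$ correspond to boundary components of $\mathbb{G}^*$ and boundary components of $\mathbb{G}$ to vertices of $\mathbb{G}^*$. A packaged ribbon graph is a tuple $\underline{\mathbb{G}}=(\mathbb{G},\mathcal{V},\omega_{\mathcal{V}},\mathcal{F},\omega_{\mathcal{F}})$ where $\mathbb{G}=(V,E)$ is a ribbon graph with set of boundary components $F$, $\mathcal{V}$ is a partition of $V$, $\mathcal{F}$ is a partition of $F$,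 and $\omega_{\mathcal{V}}:\mathcal{V}\to\mathbb{N}_0$, $\omega_{\mathcal{F}}:\mathcal{F}\to\mathbb{N}_0$ are weightings. $[v]$ and $[f]$ denote the blocks containing $v$ and $f$. Deletion $\underline{\mathbb{G}}\backslash e$: the ribbon graph is $\mathbb{G}\backslash e$, and $\mathcal{V},\omega_{\mathcal{V}}$ are unchanged; boundary components not meeting $e$ persist with their blocks and weights. (i) If $e$ meets a single boundary component $f$ (twice), deleting $e$ creates two boundary components $f',g'$ in place of $f$; the block $[f]$ is replaced by $([f]\setminus\{f\})\cup\{f',g'\}$ with weight $\omega_{\mathcal{F}}([f])+1$. (ii) If $e$ meets two boundary components $f\neq g$ with $[f]=[g]$, deletion creates one boundary component $f'$; the block is replaced by $([f]\setminus\{f,g\})\cup\{f'\}$ with weight $\omega_{\mathcal{F}}([f])+1$. (iii) If $e$ meets $f\ne g$ with $[f]\neq[g]$, deletion creates one boundary component $f'$; the blocks $[f],[g]$ are replaced by the single block $([f]\cup[g]\setminus\{f,g\})\cup\{f'\}$ with weight $\omega_{\mathcal{F}}([f])+\omega_{\mathcal{F}}([g])$. All other blocks and weights are unchanged. Contraction $\underline{\mathbb{G}}/e$: the ribbon graph is $\mathbb{G}/e$; boundary components of $\mathbb{G}$ and $\mathbb{G}/e$ correspond naturally, and $\mathcal{F},\omega_{\mathcal{F}}$ are transported along this correspondence. (i) If $e$ is a loop at $u$, contraction replaces $u$ by two vertices $u',v'$; the block $[u]$ is replaced by $([u]\setminus\{u\})\cup\{u',v'\}$ with weight $\omega_{\mathcal{V}}([u])+1$.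 (ii) If $e$ is a non-loop with ends $u\ne v$ and $[u]=[v]$, contraction gives one vertex $u'$; the block is replaced by $([u]\setminus\{u,v\})\cup\{u'\}$ with weight $\omega_{\mathcal{V}}([u])+1$. (iii) If $e$ has ends $u\neq v$ with $[u]\ne[v]$, the blocks $[u],[v]$ are replaced by $([u]\cup[v]\setminus\{u,v\})\cup\{u'\}$ with weight $\omega_{\mathcal{V}}([u])+\omega_{\mathcal{V}}([v])$. All other blocks and weights are unchanged. Dual: $\underline{\mathbb{G}}^*=(\mathbb{G}^*,\mathcal{V}^*,\omega_{\mathcal{V}^*},\mathcal{F}^*,\omega_{\mathcal{F}^*})$, where $\mathcal{V}^*$ (a partition of the vertices of $\mathbb{G}^*$) and its weighting are induced from $\mathcal{F},\omega_{\mathcal{F}}$ via the correspondence between boundary components of $\mathbb{G}$ and vertices of $\mathbb{G}^*$, and $\mathcal{F}^*,\omega_{\mathcal{F}^*}$ are induced from $\mathcal{V},\omega_{\mathcal{V}}$ via the correspondence between vertices of $\mathbb{G}$ and boundary components of $\mathbb{G}^*$. Edges of $\mathbb{G}^*$ are identified with those of $\mathbb{G}$. *)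

theory Defs
  imports "HOL-Combinatorics.Permutations"
begin

text \<open>
Orientable ribbon graphs are encoded as combinatorial maps (rotation systems).  A dart p with
alpha p = p is a point dart; it must satisfy sigma p = p and it represents an isolated
vertex (a vertex meeting no edge).
\<close>

record 'd rgraph =
  darts :: "'d set"
  alpha :: "'d \<Rightarrow> 'd"
  sigma :: "'d \<Rightarrow> 'd"

definition rg_orbit :: "('d \<Rightarrow> 'd) \<Rightarrow> 'd \<Rightarrow> 'd set" where
  "rg_orbit f x = {(f ^^ n) x | n. True}"

definition rg_wf :: "'d rgraph \<Rightarrow> bool" where
  "rg_wf G \<longleftrightarrow> finite (darts G)
     \<and> alpha G permutes darts G \<and> (\<forall>x. alpha G (alpha G x) = x)
     \<and> sigma G permutes darts G
     \<and> (\<forall>x\<in>darts G. alpha G x = x \<longrightarrow> sigma G x = x)"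

definition rg_phi :: "'d rgraph \<Rightarrow> 'd \<Rightarrow> 'd" where
  "rg_phi G = sigma G \<circ> alpha G"

definition rg_vertices :: "'d rgraph \<Rightarrow> 'd set set" where
  "rg_vertices G = {rg_orbit (sigma G) x | x. x \<in> darts G}"

definition rg_faces :: "'d rgraph \<Rightarrow> 'd set set" where
  "rg_faces G = {rg_orbit (rg_phi G) x | x. x \<in> darts G}"

definition rg_edges :: "'d rgraph \<Rightarrow> 'd set set" where
  "rg_edges G = {{x, alpha G x} | x. x \<in> darts G \<and> alpha G x \<noteq> x}"

definition rg_skip :: "('d \<Rightarrow> 'd) \<Rightarrow> 'd set \<Rightarrow> 'd \<Rightarrow> 'd" where
  "rg_skip f D x = (f ^^ (LEAST n. 0 < n \<and> (f ^^ n) x \<notin> D)) x"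

text \<open>Naming convention: an orbit O of darts that lies entirely inside the removed edge
 disappears; the corresponding isolated vertex is represented by the point dart
 (SOME x. x \<in> O).\<close>
definition rg_keep :: "'d set \<Rightarrow> 'd" where
  "rg_keep Q = (SOME x. x \<in> Q)"

text \<open>Natural correspondence of orbits (vertices for deletion, faces for contraction).\<close>
definition rg_transport :: "'d set \<Rightarrow> 'd set \<Rightarrow> 'd set" where
  "rg_transport e Q = (if Q \<subseteq> e then {rg_keep Q} else Q - e)"

definition rg_delete :: "'d rgraph \<Rightarrow> 'd set \<Rightarrow> 'd rgraph" where
  "rg_delete G e =
     (let P = rg_keep ` {Q \<in> rg_vertices G. Q \<subseteq> e} in
      \<lparr> darts = (darts G - e) \<union> P,
        alpha = (\<lambda>x. if x \<in> darts G - e then alpha G x else x),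
        sigma = (\<lambda>x. if x \<in> darts G - e then rg_skip (sigma G) e x else x) \<rparr>)"

definition rg_contract :: "'d rgraph \<Rightarrow> 'd set \<Rightarrow> 'd rgraph" where
  "rg_contract G e =
     (let P = rg_keep ` {Q \<in> rg_faces G. Q \<subseteq> e};
          a = (\<lambda>x. if x \<in> darts G - e then alpha G x else x);
          ph = (\<lambda>x. if x \<in> darts G - e then rg_skip (rg_phi G) e x else x) in
      \<lparr> darts = (darts G - e) \<union> P,
        alpha = a,
        sigma = ph \<circ> a \<rparr>)"

definition rg_dual :: "'d rgraph \<Rightarrow> 'd rgraph" where
  "rg_dual G = \<lparr> darts = darts G, alpha = alpha G, sigma = rg_phi G \<rparr>"

text \<open>Packaged ribbon graphs.  Partitions are sets of blocks; weights are functions on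
 blocks (only their values on blocks are meaningful).\<close>

record 'd pgraph =
  pg_graph :: "'d rgraph"
  pg_VP :: "'d set set set"
  pg_wV :: "'d set set \<Rightarrow> nat"
  pg_FP :: "'d set set set"
  pg_wF :: "'d set set \<Rightarrow> nat"

definition is_partition :: "'a set \<Rightarrow> 'a set set \<Rightarrow> bool" where
  "is_partition S P \<longleftrightarrow> (\<forall>B\<in>P. B \<noteq> {} \<and> B \<subseteq> S) \<and> \<Union>P = S
     \<and> (\<forall>B\<in>P. \<forall>C\<in>P. B \<noteq> C \<longrightarrow> B \<inter> C = {})"

definition pg_wf :: "'d pgraph \<Rightarrow> bool" where
  "pg_wf P \<longleftrightarrow> rg_wf (pg_graph P)
     \<and> is_partition (rg_vertices (pg_graph P)) (pg_VP P)
     \<and> is_partition (rg_faces (pg_graph P)) (pg_FP P)"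

definition pg_eq :: "'d pgraph \<Rightarrow> 'd pgraph \<Rightarrow> bool" where
  "pg_eq P Q \<longleftrightarrow> pg_graph P = pg_graph Q \<and> pg_VP P = pg_VP Q \<and> pg_FP P = pg_FP Q
     \<and> (\<forall>B\<in>pg_VP P. pg_wV P B = pg_wV Q B) \<and> (\<forall>B\<in>pg_FP P. pg_wF P B = pg_wF Q B)"

text \<open>Xs: old objects (vertices or faces) of G,
 Ys: objects of the new graph, Bl/w: partition and weight on Xs.
 This covers cases (i), (ii), (iii) uniformly.\<close>
definition merge_blocks :: "'d set \<Rightarrow> 'd set set \<Rightarrow> 'd set set \<Rightarrow> 'd set set set
     \<Rightarrow> ('d set set \<Rightarrow> nat) \<Rightarrow> 'd set set set \<times> ('d set set \<Rightarrow> nat)" where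
  "merge_blocks e Xs Ys Bl w =
     (let XM = {X \<in> Xs. X \<inter> e \<noteq> {}};
          TB = {B \<in> Bl. B \<inter> XM \<noteq> {}};
          NY = {Y \<in> Ys. Y \<inter> \<Union>XM \<noteq> {}};
          M = (\<Union>TB - XM) \<union> NY;
          wM = (if card TB = 1 then (\<Sum>B\<in>TB. w B) + 1 else (\<Sum>B\<in>TB. w B)) in
      ((Bl - TB) \<union> {M}, (\<lambda>B. if B = M then wM else w B)))"

definition transport_blocks :: "'d set \<Rightarrow> 'd set set set
     \<Rightarrow> ('d set set \<Rightarrow> nat) \<Rightarrow> 'd set set set \<times> ('d set set \<Rightarrow> nat)" where
  "transport_blocks e Bl w =
     ((\<lambda>B. rg_transport e ` B) ` Bl, (\<lambda>B'. w (inv_into Bl (\<lambda>B. rg_transport e ` B) B')))"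

definition pg_delete :: "'d pgraph \<Rightarrow> 'd set \<Rightarrow> 'd pgraph" where
  "pg_delete P e =
     (let G = pg_graph P; G' = rg_delete G e;
          V' = transport_blocks e (pg_VP P) (pg_wV P);
          F' = merge_blocks e (rg_faces G) (rg_faces G') (pg_FP P) (pg_wF P) in
      \<lparr> pg_graph = G', pg_VP = fst V', pg_wV = snd V', pg_FP = fst F', pg_wF = snd F' \<rparr>)"

definition pg_contract :: "'d pgraph \<Rightarrow> 'd set \<Rightarrow> 'd pgraph" where
  "pg_contract P e =
     (let G = pg_graph P; G' = rg_contract G e;
          V' = merge_blocks e (rg_vertices G) (rg_vertices G') (pg_VP P) (pg_wV P);
          F' = transport_blocks e (pg_FP P) (pg_wF P) in
      \<lparr> pg_graph = G', pg_VP = fst V', pg_wV = snd V', pg_FP = fst F', pg_wF = snd F' \<rparr>)"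

definition pg_dual :: "'d pgraph \<Rightarrow> 'd pgraph" where
  "pg_dual P = \<lparr> pg_graph = rg_dual (pg_graph P), pg_VP = pg_FP P, pg_wV = pg_wF P,
                 pg_FP = pg_VP P, pg_wF = pg_wV P \<rparr>"

end

theory Submission
  imports Defs
begin

text \<open>Duality exchanges the vertex permutation sigma with the face permutation
  sigma \<circ> alpha.  Deleting e skips the darts of e in sigma, contracting e skips them in
  sigma \<circ> alpha, so both operations are exchanged by duality; the only point needing the
  edge hypothesis is that alpha restricted to the remaining darts is still an involution,
  which makes the face permutation of G/e equal to the skipped face permutation of G.
  Since duality also swaps the vertex and face packaging, the block merging and block
  transport of the two sides are then applied to literally the same data.\<close>

lemma rg_dual_simps [simp]:
  "darts (rg_dual G) = darts G" "alpha (rg_dual G) = alpha G" "sigma (rg_dual G) = rg_phi G"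
  unfolding rg_dual_def by simp_all

lemma rg_phi_rg_dual:
  assumes "\<forall>x. alpha G (alpha G x) = x"
  shows "rg_phi (rg_dual G) = sigma G"
  using assms unfolding rg_phi_def rg_dual_def by auto

lemma rg_faces_rg_dual:
  assumes "\<forall>x. alpha G (alpha G x) = x"
  shows "rg_faces (rg_dual G) = rg_vertices G"
  unfolding rg_faces_def rg_vertices_def by (simp add: rg_phi_rg_dual[OF assms])

lemma rg_vertices_rg_dual: "rg_vertices (rg_dual G) = rg_faces G"
  unfolding rg_faces_def rg_vertices_def by simp

lemma rg_wf_alpha_involution: "rg_wf G \<Longrightarrow> \<forall>x. alpha G (alpha G x) = x"
  unfolding rg_wf_def by blast

lemma alpha_rg_contract_involution:
  assumes "rg_wf G" and "e \<in> rg_edges G"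
  shows "\<forall>x. alpha (rg_contract G e) (alpha (rg_contract G e) x) = x"
proof
  fix x
  obtain y where e: "e = {y, alpha G y}"
    using assms(2) unfolding rg_edges_def by auto
  have inv: "\<And>z. alpha G (alpha G z) = z"
    using rg_wf_alpha_involution[OF assms(1)] by blast
  have "alpha G x \<in> darts G - e" if "x \<in> darts G - e"
  proof -
    have "alpha G x \<in> darts G"
      using that assms(1) permutes_in_image unfolding rg_wf_def by fastforce
    moreover have "alpha G x \<notin> e"
      using that inv[of x] inv[of y] unfolding e by auto
    ultimately show ?thesis by blast
  qed
  then show "alpha (rg_contract G e) (alpha (rg_contract G e) x) = x"
    unfolding rg_contract_def Let_def using inv by auto
qed

lemma rg_dual_rg_delete:
  assumes "rg_wf G"
  shows "rg_dual (rg_delete G e) = rg_contract (rg_dual G) e"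
  unfolding rg_delete_def rg_contract_def Let_def
    rg_faces_rg_dual[OF rg_wf_alpha_involution[OF assms]]
    rg_phi_rg_dual[OF rg_wf_alpha_involution[OF assms]]
  by (simp add: rg_phi_def cong: if_cong)

lemma rg_phi_rg_contract:
  assumes "rg_wf G" and "e \<in> rg_edges G"
  shows "rg_phi (rg_contract G e) = (\<lambda>x. if x \<in> darts G - e then rg_skip (rg_phi G) e x else x)"
proof -
  let ?a = "alpha (rg_contract G e)"
  have "?a \<circ> ?a = id"
    using alpha_rg_contract_involution[OF assms] by auto
  then show ?thesis
    unfolding rg_phi_def[of "rg_contract G e"]
    by (simp add: rg_contract_def Let_def comp_assoc)
qed

lemma rg_dual_rg_contract:
  assumes "rg_wf G" and "e \<in> rg_edges G"
  shows "rg_dual (rg_contract G e) = rg_delete (rg_dual G) e"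
  unfolding rg_dual_def[of "rg_contract G e"] rg_phi_rg_contract[OF assms]
  by (simp add: rg_delete_def rg_contract_def Let_def rg_vertices_rg_dual cong: if_cong)

lemma pg_dual_pg_delete:
  assumes "rg_wf (pg_graph P)"
  shows "pg_dual (pg_delete P e) = pg_contract (pg_dual P) e"
proof -
  have "rg_vertices (rg_contract (rg_dual (pg_graph P)) e) = rg_faces (rg_delete (pg_graph P) e)"
    by (simp flip: rg_dual_rg_delete[OF assms] add: rg_vertices_rg_dual)
  then show ?thesis
    using rg_dual_rg_delete[OF assms, of e]
    by (simp add: pg_dual_def pg_delete_def pg_contract_def Let_def rg_vertices_rg_dual)
qed

lemma pg_dual_pg_contract:
  assumes "rg_wf (pg_graph P)" and "e \<in> rg_edges (pg_graph P)"
  shows "pg_dual (pg_contract P e) = pg_delete (pg_dual P) e"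
proof -
  have "rg_faces (rg_delete (rg_dual (pg_graph P)) e) = rg_vertices (rg_contract (pg_graph P) e)"
    using rg_faces_rg_dual[OF alpha_rg_contract_involution[OF assms]]
    by (simp add: rg_dual_rg_contract[OF assms])
  then show ?thesis
    using rg_dual_rg_contract[OF assms]
      rg_faces_rg_dual[OF rg_wf_alpha_involution[OF assms(1)]]
    by (simp add: pg_dual_def pg_delete_def pg_contract_def Let_def)
qed

lemma pg_eq_refl: "pg_eq P P"
  unfolding pg_eq_def by simp

theorem proposition2p7:
  fixes P :: "'d pgraph" and e :: "'d set"
  assumes "pg_wf P" and "e \<in> rg_edges (pg_graph P)"
  shows "pg_eq (pg_dual (pg_delete P e)) (pg_contract (pg_dual P) e)
       \<and> pg_eq (pg_dual (pg_contract P e)) (pg_delete (pg_dual P) e)"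
proof -
  have wf: "rg_wf (pg_graph P)"
    using assms(1) unfolding pg_wf_def by simp
  show ?thesis
    using pg_dual_pg_delete[OF wf] pg_dual_pg_contract[OF wf assms(2)]
    by (simp add: pg_eq_refl)
qed

end
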